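(* Let $A$ be a left counital bialgebra. Then the comultiplication $\Delta_T:Ш(A)\to Ш(A)\otimes Ш(A)$ is an algebra homomorphism, i.e. $\Delta_T(\mathfrak a\diamond\mathfrak b)=\Delta_T(\mathfrak a)\bullet\Delta_T(\mathfrak b)$ for all $\mathfrak a,\mathfrak b\in Ш(A)$.
   Context: Throughout, $\mathbf{k}$ is a commutative unital ring, all algebras are unital commutative $\mathbf{k}$-algebras, tensor products are over $\mathbf{k}$. A left counital bialgebra $(H,m,\mu,\Delta,\varepsilon)$ is an algebra $H$ with algebra homomorphisms $\Delta:H\to H\otimes H$ (coassociative) and $\varepsilon:H\to\mathbf{k}$ satisfying left counicity $(\varepsilon\otimes\mathrm{id})\Delta=\beta_\ell$, where $\beta_\ell(u)=1\otimes u$; right counicity is not required. For an algebra $A$ with unit $1_A$, $Ш(A)=\bigoplus_{n\ge1}A^{\otimes n}$, $P_r(\mathfrak a)=1_A\otimes\mathfrak a$, and the product $\diamond$ is defined bilinearly on pure tensors $\mathfrak a=a_1\otimes\mathfrak a'\in A^{\otimes m}$, $\mathfrak b=b_1\otimes\mathfrak b'\in A^{\otimes n}$ by: $a_1b_1$ if $m=n=1$; $a_1b_1\otimes\mathfrak b'$ if $m=1,n\ge2$; $a_1b_1\otimes\mathfrak a'$ if $m\ge2,n=1$; $a_1b_1\otimes\big(\mathfrak a'\diamond(1_A\otimes\mathfrak b')+(1_A\otimes\mathfrak a')\diamond\mathfrak b'-1_A\otimes(\mathfrak a'\diamond\mathfrak b')\big)$ if $m,n\ge2$. $(Ш(A),\diamond)$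 is a commutative algebra with unit $1_A$ and $P_r$ satisfies the Nijenhuis equation $P(x)P(y)=P(P(x)y)+P(xP(y))-P^2(xy)$. $Ш(A)\otimes Ш(A)$ has the product $\bullet$, $(x\otimes y)\bullet(x'\otimes y')=(x\diamond x')\otimes(y\diamond y')$, and $A\otimes A\subseteq Ш(A)\otimes Ш(A)$ via $A=A^{\otimes1}$. When $A$ is a left counital bialgebra with coproduct $\Delta_A$, the linear map $\Delta_T:Ш(A)\to Ш(A)\otimes Ш(A)$ is defined on pure tensors by induction on tensor length: $\Delta_T(a)=\Delta_A(a)$ for $a\in A$, and for $\mathfrak a'\in A^{\otimes n}$, $\Delta_T(1_A\otimes\mathfrak a')=(\mathrm{id}\otimes P_r)\Delta_T(\mathfrak a')$ and $\Delta_T(a_1\otimes\mathfrak a')=\Delta_A(a_1)\bullet(\mathrm{id}\otimes P_r)\Delta_T(\mathfrak a')$. *)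

theory Defs
  imports Main "HOL.Modules" "HOL-Library.Poly_Mapping"
begin

text \<open>Tensor products over k are presented as quotients of free
modules on tuples/lists of algebra elements by the k-submodule generated by the
multilinearity relations; we work with representatives and equality modulo
that submodule.\<close>

definition smult_fm :: "'k::comm_ring_1 \<Rightarrow> ('x \<Rightarrow>\<^sub>0 'k) \<Rightarrow> ('x \<Rightarrow>\<^sub>0 'k)" where
  "smult_fm c v = Poly_Mapping.map (\<lambda>d. c * d) v"

definition lin_ext :: "('x \<Rightarrow> ('y \<Rightarrow>\<^sub>0 'k::comm_ring_1)) \<Rightarrow> ('x \<Rightarrow>\<^sub>0 'k) \<Rightarrow> ('y \<Rightarrow>\<^sub>0 'k)" where
  "lin_ext f v = (\<Sum>x\<in>Poly_Mapping.keys v. smult_fm (Poly_Mapping.lookup v x) (f x))"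

definition bilin_ext :: "('x \<Rightarrow> 'y \<Rightarrow> ('z \<Rightarrow>\<^sub>0 'k::comm_ring_1))
    \<Rightarrow> ('x \<Rightarrow>\<^sub>0 'k) \<Rightarrow> ('y \<Rightarrow>\<^sub>0 'k) \<Rightarrow> ('z \<Rightarrow>\<^sub>0 'k)" where
  "bilin_ext f v w = (\<Sum>x\<in>Poly_Mapping.keys v. \<Sum>y\<in>Poly_Mapping.keys w. smult_fm (Poly_Mapping.lookup v x * Poly_Mapping.lookup w y) (f x y))"

definition slot_gens :: "('k::comm_ring_1 \<Rightarrow> 'a::ab_group_add \<Rightarrow> 'a) \<Rightarrow> ('a \<Rightarrow> 'x) \<Rightarrow> ('x \<Rightarrow>\<^sub>0 'k) set" where
  "slot_gens scale F =
     {Poly_Mapping.single (F (a + b)) 1 - Poly_Mapping.single (F a) 1 - Poly_Mapping.single (F b) 1 | a b. True}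
   \<union> {Poly_Mapping.single (F (scale c a)) 1 - Poly_Mapping.single (F a) c | c a. True}"

inductive_set submod :: "('x \<Rightarrow>\<^sub>0 'k::comm_ring_1) set \<Rightarrow> ('x \<Rightarrow>\<^sub>0 'k) set" for G where
  zero: "0 \<in> submod G"
| gen: "g \<in> G \<Longrightarrow> g \<in> submod G"
| add: "u \<in> submod G \<Longrightarrow> v \<in> submod G \<Longrightarrow> u + v \<in> submod G"
| smult: "u \<in> submod G \<Longrightarrow> smult_fm c u \<in> submod G"

definition tensor_eq :: "('k::comm_ring_1 \<Rightarrow> 'a::ab_group_add \<Rightarrow> 'a) \<Rightarrow> ('a \<Rightarrow> 'x) set
    \<Rightarrow> ('x \<Rightarrow>\<^sub>0 'k) \<Rightarrow> ('x \<Rightarrow>\<^sub>0 'k) \<Rightarrow> bool" where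
  "tensor_eq scale Slots u v \<longleftrightarrow> u - v \<in> submod (\<Union>F\<in>Slots. slot_gens scale F)"

text \<open>Slots: A \<otimes> A (basis 'a \<times> 'a), A \<otimes> A \<otimes> A (basis 'a \<times> 'a \<times> 'a),
  Sha(A) = \<Oplus>_{n\<ge>1} A^{\<otimes>n} (basis nonempty lists), Sha(A) \<otimes> Sha(A) (basis: pairs of lists).\<close>
definition slots2 :: "('a \<Rightarrow> 'a \<times> 'a) set" where
  "slots2 = {(\<lambda>a. (a, b)) | b. True} \<union> {(\<lambda>b. (a, b)) | a. True}"

definition slots3 :: "('a \<Rightarrow> 'a \<times> 'a \<times> 'a) set" where
  "slots3 = {(\<lambda>a. (a, b, c)) | b c. True} \<union> {(\<lambda>b. (a, b, c)) | a c. True}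
          \<union> {(\<lambda>c. (a, b, c)) | a b. True}"

definition slots_sh :: "('a \<Rightarrow> 'a list) set" where
  "slots_sh = {(\<lambda>a. xs @ a # ys) | xs ys. True}"

definition slots_sh2 :: "('a \<Rightarrow> 'a list \<times> 'a list) set" where
  "slots_sh2 = {(\<lambda>a. (xs @ a # ys, zs)) | xs ys zs. True} \<union> {(\<lambda>a. (zs, xs @ a # ys)) | xs ys zs. True}"

definition comm_k_algebra :: "('k::comm_ring_1 \<Rightarrow> 'a::comm_ring_1 \<Rightarrow> 'a) \<Rightarrow> bool" where
  "comm_k_algebra scale \<longleftrightarrow> module scale \<and> (\<forall>c x y. scale c (x * y) = scale c x * y)"

definition mult2 :: "('a::comm_ring_1 \<times> 'a \<Rightarrow>\<^sub>0 'k::comm_ring_1) \<Rightarrow> ('a \<times> 'a \<Rightarrow>\<^sub>0 'k) \<Rightarrow> ('a \<times> 'a \<Rightarrow>\<^sub>0 'k)" where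
  "mult2 = bilin_ext (\<lambda>(a, b) (a', b'). Poly_Mapping.single (a * a', b * b') 1)"

definition left_counital_bialgebra ::
  "('k::comm_ring_1 \<Rightarrow> 'a::comm_ring_1 \<Rightarrow> 'a) \<Rightarrow> ('a \<Rightarrow> ('a \<times> 'a \<Rightarrow>\<^sub>0 'k)) \<Rightarrow> ('a \<Rightarrow> 'k) \<Rightarrow> bool" where
  "left_counital_bialgebra scale \<Delta> \<epsilon> \<longleftrightarrow>
     comm_k_algebra scale
     \<comment> \<open>\<Delta> is a k-algebra homomorphism A \<rightarrow> A \<otimes> A\<close>
   \<and> (\<forall>a b. tensor_eq scale slots2 (\<Delta> (a + b)) (\<Delta> a + \<Delta> b))
   \<and> (\<forall>c a. tensor_eq scale slots2 (\<Delta> (scale c a)) (smult_fm c (\<Delta> a)))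
   \<and> (\<forall>a b. tensor_eq scale slots2 (\<Delta> (a * b)) (mult2 (\<Delta> a) (\<Delta> b)))
   \<and> tensor_eq scale slots2 (\<Delta> 1) (Poly_Mapping.single (1, 1) 1)
     \<comment> \<open>coassociativity: (\<Delta> \<otimes> id) \<Delta> = (id \<otimes> \<Delta>) \<Delta>\<close>
   \<and> (\<forall>u. tensor_eq scale slots3
          (lin_ext (\<lambda>(a, b). lin_ext (\<lambda>(x, y). Poly_Mapping.single (x, y, b) 1) (\<Delta> a)) (\<Delta> u))
          (lin_ext (\<lambda>(a, b). lin_ext (\<lambda>(x, y). Poly_Mapping.single (a, x, y) 1) (\<Delta> b)) (\<Delta> u)))
     \<comment> \<open>\<epsilon> is a k-algebra homomorphism A \<rightarrow> k\<close>
   \<and> (\<forall>a b. \<epsilon> (a + b) = \<epsilon> a + \<epsilon> b)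
   \<and> (\<forall>c a. \<epsilon> (scale c a) = c * \<epsilon> a)
   \<and> (\<forall>a b. \<epsilon> (a * b) = \<epsilon> a * \<epsilon> b)
   \<and> \<epsilon> 1 = 1
     \<comment> \<open>left counicity (\<epsilon> \<otimes> id) \<Delta> = \<beta>_l, with k \<otimes> A identified with A via c \<otimes> a \<mapsto> c a\<close>
   \<and> (\<forall>u. (\<Sum>p\<in>Poly_Mapping.keys (\<Delta> u). scale (Poly_Mapping.lookup (\<Delta> u) p * \<epsilon> (fst p)) (snd p)) = u)"

definition prepend :: "'a \<Rightarrow> ('a list \<Rightarrow>\<^sub>0 'k::comm_ring_1) \<Rightarrow> ('a list \<Rightarrow>\<^sub>0 'k)" where
  "prepend a v = lin_ext (\<lambda>xs. Poly_Mapping.single (a # xs) 1) v"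

definition Pr :: "('a::comm_ring_1 list \<Rightarrow>\<^sub>0 'k::comm_ring_1) \<Rightarrow> ('a list \<Rightarrow>\<^sub>0 'k)" where
  "Pr v = prepend 1 v"

text \<open>The product \<diamond> on pure tensors (basis lists); the empty list is not a basis
  element of Sha(A) and is sent to 0.\<close>
function dia :: "'a::comm_ring_1 list \<Rightarrow> 'a list \<Rightarrow> ('a list \<Rightarrow>\<^sub>0 'k::comm_ring_1)" where
  "dia [a] [b] = Poly_Mapping.single [a * b] 1"
| "dia [a] (b # b' # bs) = Poly_Mapping.single (a * b # b' # bs) 1"
| "dia (a # a' # as) [b] = Poly_Mapping.single (a * b # a' # as) 1"
| "dia (a # a' # as) (b # b' # bs) =
     prepend (a * b) (dia (a' # as) (1 # b' # bs) + dia (1 # a' # as) (b' # bs)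
                      - Pr (dia (a' # as) (b' # bs)))"
| "dia [] ys = 0"
| "dia (x # xs) [] = 0"
  by pat_completeness auto
termination by (relation "measure (\<lambda>(xs, ys). length xs + length ys)") auto

definition diamond :: "('a::comm_ring_1 list \<Rightarrow>\<^sub>0 'k::comm_ring_1) \<Rightarrow> ('a list \<Rightarrow>\<^sub>0 'k) \<Rightarrow> ('a list \<Rightarrow>\<^sub>0 'k)" where
  "diamond = bilin_ext dia"

definition tens :: "('a list \<Rightarrow>\<^sub>0 'k::comm_ring_1) \<Rightarrow> ('a list \<Rightarrow>\<^sub>0 'k) \<Rightarrow> ('a list \<times> 'a list \<Rightarrow>\<^sub>0 'k)" where
  "tens = bilin_ext (\<lambda>x y. Poly_Mapping.single (x, y) 1)"

definition bullet :: "('a::comm_ring_1 list \<times> 'a list \<Rightarrow>\<^sub>0 'k::comm_ring_1)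
    \<Rightarrow> ('a list \<times> 'a list \<Rightarrow>\<^sub>0 'k) \<Rightarrow> ('a list \<times> 'a list \<Rightarrow>\<^sub>0 'k)" where
  "bullet = bilin_ext (\<lambda>(xs, ys) (xs', ys'). tens (dia xs xs') (dia ys ys'))"

definition id_Pr :: "('a::comm_ring_1 list \<times> 'a list \<Rightarrow>\<^sub>0 'k::comm_ring_1) \<Rightarrow> ('a list \<times> 'a list \<Rightarrow>\<^sub>0 'k)" where
  "id_Pr = lin_ext (\<lambda>(xs, ys). Poly_Mapping.single (xs, 1 # ys) 1)"

text \<open>Inclusion A \<otimes> A \<subseteq> Sha(A) \<otimes> Sha(A) via A = A^{\<otimes>1}.\<close>
definition emb2 :: "('a \<times> 'a \<Rightarrow>\<^sub>0 'k::comm_ring_1) \<Rightarrow> ('a list \<times> 'a list \<Rightarrow>\<^sub>0 'k)" where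
  "emb2 = lin_ext (\<lambda>(a, b). Poly_Mapping.single ([a], [b]) 1)"

fun DeltaT_basis :: "('a::comm_ring_1 \<Rightarrow> ('a \<times> 'a \<Rightarrow>\<^sub>0 'k::comm_ring_1)) \<Rightarrow> 'a list \<Rightarrow> ('a list \<times> 'a list \<Rightarrow>\<^sub>0 'k)" where
  "DeltaT_basis \<Delta> [] = 0"
| "DeltaT_basis \<Delta> [a] = emb2 (\<Delta> a)"
| "DeltaT_basis \<Delta> (a # a' # as) =
     (if a = 1 then id_Pr (DeltaT_basis \<Delta> (a' # as))
      else bullet (emb2 (\<Delta> a)) (id_Pr (DeltaT_basis \<Delta> (a' # as))))"

definition DeltaT :: "('a::comm_ring_1 \<Rightarrow> ('a \<times> 'a \<Rightarrow>\<^sub>0 'k::comm_ring_1)) \<Rightarrow> ('a list \<Rightarrow>\<^sub>0 'k) \<Rightarrow> ('a list \<times> 'a list \<Rightarrow>\<^sub>0 'k)" where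
  "DeltaT \<Delta> = lin_ext (DeltaT_basis \<Delta>)"

text \<open>Representatives of elements of Sha(A) = \<Oplus>_{n\<ge>1} A^{\<otimes>n}.\<close>
definition sha_elem :: "('a list \<Rightarrow>\<^sub>0 'k::zero) \<Rightarrow> bool" where
  "sha_elem v \<longleftrightarrow> (\<forall>xs\<in>Poly_Mapping.keys v. xs \<noteq> [])"

end

theory Submission
  imports Defs
begin

text \<open>On pure tensors with at least two factors
  \<open>\<Delta>\<^sub>T(a\<^sub>1 \<otimes> \<aa>') = \<Delta>(a\<^sub>1) \<bullet> (id \<otimes> P\<^sub>r)\<Delta>\<^sub>T(\<aa>')\<close>, while
  \<open>(a\<^sub>1 \<otimes> \<aa>') \<diamond> (b\<^sub>1 \<otimes> \<bb>') = a\<^sub>1b\<^sub>1 \<otimes> (\<aa>' \<diamond> P\<^sub>r\<bb>' + P\<^sub>r\<aa>' \<diamond> \<bb>' - P\<^sub>r(\<aa>' \<diamond> \<bb>'))\<close>.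
  Hence, by induction on the total tensor length, multiplicativity of \<open>\<Delta>\<^sub>T\<close> reduces to
  multiplicativity of \<open>\<Delta>\<close> on A and to the Nijenhuis identity for \<open>id \<otimes> P\<^sub>r\<close>, which holds
  because \<open>id \<otimes> P\<^sub>r\<close> is \<open>P\<^sub>r\<close> acting on the second factor.  Since the tensor products are
  free modules modulo the multilinearity relations, one must also check that all operations
  involved respect these relations.\<close>

lemma lookup_smult_fm [simp]: "Poly_Mapping.lookup (smult_fm c v) x = c * Poly_Mapping.lookup v x"
  by (simp add: smult_fm_def map.rep_eq when_def)

lemma smult_fm_add_right: "smult_fm c (u + v) = smult_fm c u + smult_fm c v"
  by (rule poly_mapping_eqI) (simp add: lookup_add algebra_simps)

lemma smult_fm_diff_right: "smult_fm c (u - v) = smult_fm c u - smult_fm c v"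
  by (rule poly_mapping_eqI) (simp add: lookup_minus algebra_simps)

lemma smult_fm_add_left: "smult_fm (c + d) u = smult_fm c u + smult_fm d u"
  by (rule poly_mapping_eqI) (simp add: lookup_add algebra_simps)

lemma smult_fm_smult_fm: "smult_fm c (smult_fm d u) = smult_fm (c * d) u"
  by (rule poly_mapping_eqI) (simp add: algebra_simps)

lemma smult_fm_one [simp]: "smult_fm 1 u = u"
  by (rule poly_mapping_eqI) simp

lemma smult_fm_zero_left [simp]: "smult_fm 0 u = 0"
  by (rule poly_mapping_eqI) simp

lemma smult_fm_zero_right [simp]: "smult_fm c 0 = 0"
  by (rule poly_mapping_eqI) simp

lemma smult_fm_minus_one: "smult_fm (-1) u = - u"
  by (rule poly_mapping_eqI) simp

lemma smult_fm_single: "smult_fm c (Poly_Mapping.single x d) = Poly_Mapping.single x (c * d)"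
  by (rule poly_mapping_eqI) (simp add: lookup_single when_def)

lemma smult_fm_sum: "smult_fm c (sum f A) = (\<Sum>x\<in>A. smult_fm c (f x))"
  by (induction A rule: infinite_finite_induct) (auto simp: smult_fm_add_right)

lemma keys_smult_fm: "Poly_Mapping.keys (smult_fm c v) \<subseteq> Poly_Mapping.keys v"
  by (auto simp: in_keys_iff)

lemma lin_ext_superset:
  assumes "finite K" "Poly_Mapping.keys v \<subseteq> K"
  shows "lin_ext f v = (\<Sum>x\<in>K. smult_fm (Poly_Mapping.lookup v x) (f x))"
  unfolding lin_ext_def
  by (rule sum.mono_neutral_left) (use assms in \<open>auto simp: in_keys_iff\<close>)

lemma lin_ext_zero [simp]: "lin_ext f 0 = 0"
  by (simp add: lin_ext_def)

lemma lin_ext_add: "lin_ext f (u + v) = lin_ext f u + lin_ext f v"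
proof -
  let ?K = "Poly_Mapping.keys u \<union> Poly_Mapping.keys v"
  have "lin_ext f (u + v) = (\<Sum>x\<in>?K. smult_fm (Poly_Mapping.lookup (u + v) x) (f x))"
    by (rule lin_ext_superset) (auto dest: subsetD[OF keys_add])
  also have "\<dots> = (\<Sum>x\<in>?K. smult_fm (Poly_Mapping.lookup u x) (f x))
                 + (\<Sum>x\<in>?K. smult_fm (Poly_Mapping.lookup v x) (f x))"
    by (simp add: lookup_add smult_fm_add_left sum.distrib)
  also have "\<dots> = lin_ext f u + lin_ext f v"
    by (subst (1 2) lin_ext_superset[symmetric]) auto
  finally show ?thesis .
qed

lemma lin_ext_smult_fm: "lin_ext f (smult_fm c v) = smult_fm c (lin_ext f v)"
proof -
  have "lin_ext f (smult_fm c v)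
      = (\<Sum>x\<in>Poly_Mapping.keys v. smult_fm (Poly_Mapping.lookup (smult_fm c v) x) (f x))"
    by (rule lin_ext_superset) (auto simp: keys_smult_fm)
  then show ?thesis
    by (simp add: lin_ext_def smult_fm_sum smult_fm_smult_fm)
qed

lemma lin_ext_diff: "lin_ext f (u - v) = lin_ext f u - lin_ext f v"
  using lin_ext_add[of f "u - v" v] by simp

lemma lin_ext_single: "lin_ext f (Poly_Mapping.single x c) = smult_fm c (f x)"
  by (simp add: lin_ext_def)

lemma lin_ext_single_one [simp]: "lin_ext f (Poly_Mapping.single x 1) = f x"
  by (simp add: lin_ext_def)

lemma lin_ext_cong:
  "(\<And>x. x \<in> Poly_Mapping.keys v \<Longrightarrow> f x = g x) \<Longrightarrow> lin_ext f v = lin_ext g v"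
  by (simp add: lin_ext_def)

lemma lin_ext_fun_add: "lin_ext (\<lambda>x. f x + g x) v = lin_ext f v + lin_ext g v"
  by (simp add: lin_ext_def smult_fm_add_right sum.distrib)

lemma lin_ext_fun_diff: "lin_ext (\<lambda>x. f x - g x) v = lin_ext f v - lin_ext g v"
  by (simp add: lin_ext_def smult_fm_diff_right sum_subtractf)

lemma lin_ext_fun_smult_fm: "lin_ext (\<lambda>x. smult_fm c (f x)) v = smult_fm c (lin_ext f v)"
  by (simp add: lin_ext_def smult_fm_sum smult_fm_smult_fm mult.commute)

lemma lin_ext_single_id: "lin_ext (\<lambda>x. Poly_Mapping.single x 1) v = v"
  by (rule poly_mapping_eqI)
     (simp add: lin_ext_def lookup_sum smult_fm_single lookup_single when_def in_keys_iff)

lemma keys_lin_ext: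
  "Poly_Mapping.keys (lin_ext f v) \<subseteq> (\<Union>x\<in>Poly_Mapping.keys v. Poly_Mapping.keys (f x))"
  unfolding lin_ext_def using keys_sum keys_smult_fm by fastforce

lemma bilin_ext_eq_lin_ext: "bilin_ext f u v = lin_ext (\<lambda>x. lin_ext (f x) v) u"
  by (simp add: bilin_ext_def lin_ext_def smult_fm_sum smult_fm_smult_fm)

lemma bilin_ext_single_one [simp]:
  "bilin_ext f (Poly_Mapping.single x 1) (Poly_Mapping.single y 1) = f x y"
  by (simp add: bilin_ext_eq_lin_ext)

lemma bilin_ext_commute: "(\<And>x y. f x y = f y x) \<Longrightarrow> bilin_ext f u v = bilin_ext f v u"
  unfolding bilin_ext_def by (subst sum.swap) (simp add: mult.commute)

definition fm_linear :: "(('x \<Rightarrow>\<^sub>0 'k::comm_ring_1) \<Rightarrow> ('y \<Rightarrow>\<^sub>0 'k)) \<Rightarrow> bool" where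
  "fm_linear L \<longleftrightarrow> (\<forall>u v. L (u + v) = L u + L v) \<and> (\<forall>c u. L (smult_fm c u) = smult_fm c (L u))"

lemma fm_linear_add: "fm_linear L \<Longrightarrow> L (u + v) = L u + L v"
  by (simp add: fm_linear_def)

lemma fm_linear_smult_fm: "fm_linear L \<Longrightarrow> L (smult_fm c u) = smult_fm c (L u)"
  by (simp add: fm_linear_def)

lemma fm_linear_diff: "fm_linear L \<Longrightarrow> L (u - v) = L u - L v"
  unfolding fm_linear_def by (metis add_diff_cancel diff_add_cancel)

lemma fm_linear_zero: "fm_linear L \<Longrightarrow> L 0 = 0"
  unfolding fm_linear_def by (metis add_cancel_right_right)

lemma fm_linear_lin_ext: "fm_linear (lin_ext f)"
  by (simp add: fm_linear_def lin_ext_add lin_ext_smult_fm)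

lemma fm_linear_comp: "fm_linear L \<Longrightarrow> fm_linear M \<Longrightarrow> fm_linear (\<lambda>v. L (M v))"
  by (simp add: fm_linear_def)

lemma fm_linear_eq_lin_ext:
  assumes "fm_linear L"
  shows "L v = lin_ext (\<lambda>x. L (Poly_Mapping.single x 1)) v"
proof -
  have L_sum: "L (sum g A) = (\<Sum>x\<in>A. L (g x))" for g :: "_ \<Rightarrow> _" and A
    by (induction A rule: infinite_finite_induct)
       (auto simp: fm_linear_zero[OF assms] fm_linear_add[OF assms])
  have "L v = L (lin_ext (\<lambda>x. Poly_Mapping.single x 1) v)"
    by (simp add: lin_ext_single_id)
  also have "\<dots> = lin_ext (\<lambda>x. L (Poly_Mapping.single x 1)) v"
    unfolding lin_ext_def L_sum fm_linear_smult_fm[OF assms] ..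
  finally show ?thesis .
qed

lemma fm_linear_eqI:
  assumes "fm_linear L" "fm_linear M"
    and "\<And>x. x \<in> Poly_Mapping.keys v \<Longrightarrow> L (Poly_Mapping.single x 1) = M (Poly_Mapping.single x 1)"
  shows "L v = M v"
  by (subst fm_linear_eq_lin_ext[OF assms(1)], subst fm_linear_eq_lin_ext[OF assms(2)])
     (rule lin_ext_cong, fact)

definition fm_bilinear :: "(('x \<Rightarrow>\<^sub>0 'k::comm_ring_1) \<Rightarrow> ('y \<Rightarrow>\<^sub>0 'k) \<Rightarrow> ('z \<Rightarrow>\<^sub>0 'k)) \<Rightarrow> bool" where
  "fm_bilinear B \<longleftrightarrow> (\<forall>v. fm_linear (\<lambda>u. B u v)) \<and> (\<forall>u. fm_linear (B u))"

lemma fm_bilinear_bilin_ext: "fm_bilinear (bilin_ext f)"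
  unfolding fm_bilinear_def bilin_ext_eq_lin_ext
  by (auto simp: fm_linear_lin_ext fm_linear_def lin_ext_add lin_ext_smult_fm
      lin_ext_fun_add lin_ext_fun_smult_fm)

lemma fm_bilinear_eqI:
  assumes B1: "fm_bilinear B1" and B2: "fm_bilinear B2"
    and eq: "\<And>x y. x \<in> Poly_Mapping.keys u \<Longrightarrow> y \<in> Poly_Mapping.keys v \<Longrightarrow>
           B1 (Poly_Mapping.single x 1) (Poly_Mapping.single y 1)
         = B2 (Poly_Mapping.single x 1) (Poly_Mapping.single y 1)"
  shows "B1 u v = B2 u v"
proof (rule fm_linear_eqI[of "\<lambda>u. B1 u v" "\<lambda>u. B2 u v"])
  show "fm_linear (\<lambda>u. B1 u v)" "fm_linear (\<lambda>u. B2 u v)"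
    using B1 B2 by (simp_all add: fm_bilinear_def)
  fix x assume "x \<in> Poly_Mapping.keys u"
  then show "B1 (Poly_Mapping.single x 1) v = B2 (Poly_Mapping.single x 1) v"
    using B1 B2 eq unfolding fm_bilinear_def by (blast intro: fm_linear_eqI)
qed

lemma fm_linear_ident: "fm_linear (\<lambda>v. v)"
  by (simp add: fm_linear_def)

lemma fm_bilinear_linear_left: "fm_bilinear B \<Longrightarrow> fm_linear (\<lambda>u. B u v)"
  by (simp add: fm_bilinear_def)

lemma fm_bilinear_linear_right: "fm_bilinear B \<Longrightarrow> fm_linear (B u)"
  by (simp add: fm_bilinear_def)

section \<open>Congruence modulo the multilinearity relations\<close>

lemma submod_uminus: "u \<in> submod G \<Longrightarrow> - u \<in> submod G"
  using submod.smult[of u G "-1"] by (simp add: smult_fm_minus_one)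

lemma submod_diff: "u \<in> submod G \<Longrightarrow> v \<in> submod G \<Longrightarrow> u - v \<in> submod G"
  using submod.add[OF _ submod_uminus] by (metis diff_conv_add_uminus)

lemma submod_sum: "(\<And>x. x \<in> A \<Longrightarrow> f x \<in> submod G) \<Longrightarrow> sum f A \<in> submod G"
  by (induction A rule: infinite_finite_induct) (auto intro: submod.intros)

lemma submod_lin_ext:
  "(\<And>x. x \<in> Poly_Mapping.keys v \<Longrightarrow> f x \<in> submod G) \<Longrightarrow> lin_ext f v \<in> submod G"
  unfolding lin_ext_def by (rule submod_sum) (auto intro: submod.smult)

lemma tensor_eq_refl [simp]: "tensor_eq scale Slots u u"
  by (simp add: tensor_eq_def submod.zero)

lemma tensor_eq_sym: "tensor_eq scale Slots u v \<Longrightarrow> tensor_eq scale Slots v u"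
  unfolding tensor_eq_def by (drule submod_uminus) simp

lemma tensor_eq_trans [trans]:
  "tensor_eq scale Slots u v \<Longrightarrow> tensor_eq scale Slots v w \<Longrightarrow> tensor_eq scale Slots u w"
  unfolding tensor_eq_def by (drule (1) submod.add) simp

lemma tensor_eq_add:
  "tensor_eq scale Slots u u' \<Longrightarrow> tensor_eq scale Slots v v'
    \<Longrightarrow> tensor_eq scale Slots (u + v) (u' + v')"
  unfolding tensor_eq_def by (drule (1) submod.add) (simp add: algebra_simps)

lemma tensor_eq_diff:
  "tensor_eq scale Slots u u' \<Longrightarrow> tensor_eq scale Slots v v'
    \<Longrightarrow> tensor_eq scale Slots (u - v) (u' - v')"
  unfolding tensor_eq_def by (drule (1) submod_diff) (simp add: algebra_simps)

lemma tensor_eq_lin_ext_fun: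
  assumes "\<And>x. x \<in> Poly_Mapping.keys v \<Longrightarrow> tensor_eq scale Slots (f x) (g x)"
  shows "tensor_eq scale Slots (lin_ext f v) (lin_ext g v)"
  using assms unfolding tensor_eq_def lin_ext_fun_diff[symmetric] by (rule submod_lin_ext)

lemma tensor_eq_linearI:
  assumes "fm_linear L" "fm_linear M"
    and "\<And>x. x \<in> Poly_Mapping.keys v
           \<Longrightarrow> tensor_eq scale Slots (L (Poly_Mapping.single x 1)) (M (Poly_Mapping.single x 1))"
  shows "tensor_eq scale Slots (L v) (M v)"
  by (subst fm_linear_eq_lin_ext[OF assms(1)], subst fm_linear_eq_lin_ext[OF assms(2)])
     (rule tensor_eq_lin_ext_fun, fact)

lemma tensor_eq_bilinearI:
  assumes B1: "fm_bilinear B1" and B2: "fm_bilinear B2"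
    and eq: "\<And>x y. x \<in> Poly_Mapping.keys u \<Longrightarrow> y \<in> Poly_Mapping.keys v \<Longrightarrow>
           tensor_eq scale Slots (B1 (Poly_Mapping.single x 1) (Poly_Mapping.single y 1))
                                 (B2 (Poly_Mapping.single x 1) (Poly_Mapping.single y 1))"
  shows "tensor_eq scale Slots (B1 u v) (B2 u v)"
proof (rule tensor_eq_linearI[of "\<lambda>u. B1 u v" "\<lambda>u. B2 u v"])
  show "fm_linear (\<lambda>u. B1 u v)" "fm_linear (\<lambda>u. B2 u v)"
    using B1 B2 by (simp_all add: fm_bilinear_def)
  fix x assume "x \<in> Poly_Mapping.keys u"
  then show "tensor_eq scale Slots (B1 (Poly_Mapping.single x 1) v) (B2 (Poly_Mapping.single x 1) v)"
    using B1 B2 eq unfolding fm_bilinear_def by (blast intro: tensor_eq_linearI)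
qed

definition slot_linear :: "('k::comm_ring_1 \<Rightarrow> 'a::ab_group_add \<Rightarrow> 'a) \<Rightarrow> ('a \<Rightarrow> 'x) set
    \<Rightarrow> ('a \<Rightarrow> ('x \<Rightarrow>\<^sub>0 'k)) \<Rightarrow> bool" where
  "slot_linear scale Slots f \<longleftrightarrow>
     (\<forall>a b. tensor_eq scale Slots (f (a + b)) (f a + f b))
   \<and> (\<forall>c a. tensor_eq scale Slots (f (scale c a)) (smult_fm c (f a)))"

lemma slot_linear_single:
  assumes "F \<in> Slots"
  shows "slot_linear scale Slots (\<lambda>a. Poly_Mapping.single (F a) 1)"
proof -
  have "g \<in> submod (\<Union>F\<in>Slots. slot_gens scale F)" if "g \<in> slot_gens scale F" for g
    using assms that by (blast intro: submod.gen)
  moreover have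
    "Poly_Mapping.single (F (a + b)) 1 - Poly_Mapping.single (F a) 1 - Poly_Mapping.single (F b) 1
       \<in> slot_gens scale F"
    "Poly_Mapping.single (F (scale c a)) 1 - Poly_Mapping.single (F a) c \<in> slot_gens scale F"
    for a b c
    unfolding slot_gens_def by blast+
  ultimately show ?thesis
    by (simp add: slot_linear_def tensor_eq_def smult_fm_single diff_diff_eq)
qed

lemma slot_linear_zero: "slot_linear scale Slots (\<lambda>a. 0)"
  by (simp add: slot_linear_def)

lemma slot_linear_add:
  assumes f: "slot_linear scale Slots f" and g: "slot_linear scale Slots g"
  shows "slot_linear scale Slots (\<lambda>a. f a + g a)"
  unfolding slot_linear_def
proof (intro conjI allI)
  fix a b
  have "tensor_eq scale Slots (f (a + b) + g (a + b)) ((f a + f b) + (g a + g b))"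
    using f g by (simp add: slot_linear_def tensor_eq_add)
  then show "tensor_eq scale Slots (f (a + b) + g (a + b)) (f a + g a + (f b + g b))"
    by (simp add: add_ac)
next
  fix c a
  show "tensor_eq scale Slots (f (scale c a) + g (scale c a)) (smult_fm c (f a + g a))"
    using f g by (simp add: slot_linear_def tensor_eq_add smult_fm_add_right)
qed

lemma slot_linear_diff:
  assumes f: "slot_linear scale Slots f" and g: "slot_linear scale Slots g"
  shows "slot_linear scale Slots (\<lambda>a. f a - g a)"
  unfolding slot_linear_def
proof (intro conjI allI)
  fix a b
  have "tensor_eq scale Slots (f (a + b) - g (a + b)) ((f a + f b) - (g a + g b))"
    using f g by (simp add: slot_linear_def tensor_eq_diff)
  then show "tensor_eq scale Slots (f (a + b) - g (a + b)) (f a - g a + (f b - g b))"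
    by (simp add: algebra_simps)
next
  fix c a
  show "tensor_eq scale Slots (f (scale c a) - g (scale c a)) (smult_fm c (f a - g a))"
    using f g by (simp add: slot_linear_def tensor_eq_diff smult_fm_diff_right)
qed

lemma slot_linear_comp:
  assumes "fm_linear L"
    and "\<And>u v. tensor_eq scale Slots u v \<Longrightarrow> tensor_eq scale Slots' (L u) (L v)"
    and "slot_linear scale Slots f"
  shows "slot_linear scale Slots' (\<lambda>a. L (f a))"
  using assms unfolding slot_linear_def
  by (auto simp: fm_linear_add[OF assms(1), symmetric] fm_linear_smult_fm[OF assms(1), symmetric])

lemma slot_linear_lin_ext:
  assumes "\<And>x. slot_linear scale Slots (\<lambda>a. f a x)"
  shows "slot_linear scale Slots (\<lambda>a. lin_ext (f a) v)"
  using assms unfolding slot_linear_def lin_ext_fun_add[symmetric] lin_ext_fun_smult_fm[symmetric]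
  by (auto intro: tensor_eq_lin_ext_fun)

lemma slot_linear_mult:
  fixes scale :: "'k::comm_ring_1 \<Rightarrow> 'a::comm_ring_1 \<Rightarrow> 'a"
  assumes "comm_k_algebra scale" and "slot_linear scale Slots f"
  shows "slot_linear scale Slots (\<lambda>a. f (z * a))"
proof -
  have "z * scale c a = scale c (z * a)" for c a
    using assms(1) unfolding comm_k_algebra_def by (metis mult.commute)
  with assms(2) show ?thesis
    by (simp add: slot_linear_def distrib_left)
qed

lemma tensor_eq_image:
  assumes L: "fm_linear L"
    and slots: "\<And>F. F \<in> Slots \<Longrightarrow> slot_linear scale Slots' (\<lambda>a. L (Poly_Mapping.single (F a) 1))"
    and "tensor_eq scale Slots u v"
  shows "tensor_eq scale Slots' (L u) (L v)"
proof -
  have "L w \<in> submod (\<Union>F\<in>Slots'. slot_gens scale F)"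
    if "w \<in> submod (\<Union>F\<in>Slots. slot_gens scale F)" for w
    using that
  proof induction
    case zero
    then show ?case by (simp add: fm_linear_zero[OF L] submod.zero)
  next
    case (gen g)
    then obtain F where F: "F \<in> Slots" and "g \<in> slot_gens scale F" by blast
    then obtain a b c where
      "g = Poly_Mapping.single (F (a + b)) 1 - Poly_Mapping.single (F a) 1 - Poly_Mapping.single (F b) 1
       \<or> g = Poly_Mapping.single (F (scale c a)) 1 - smult_fm c (Poly_Mapping.single (F a) 1)"
      unfolding slot_gens_def by (auto simp: smult_fm_single)
    with slots[OF F] show ?case
      unfolding slot_linear_def tensor_eq_def
      by (auto simp: fm_linear_diff[OF L] fm_linear_add[OF L] fm_linear_smult_fm[OF L] diff_diff_eq)
  next
    case (add u v)
    then show ?case by (simp add: fm_linear_add[OF L] submod.add)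
  next
    case (smult u c)
    then show ?case by (simp add: fm_linear_smult_fm[OF L] submod.smult)
  qed
  with assms(3) show ?thesis
    by (simp add: tensor_eq_def fm_linear_diff[OF L, symmetric])
qed

lemma dia_Nil_right [simp]: "dia xs [] = 0"
  by (cases xs) auto

lemma dia_commute: "dia xs ys = dia ys xs"
  by (induction xs ys rule: dia.induct) (auto simp: mult.commute add.commute)

lemma dia_Cons_Cons:
  "u \<noteq> [] \<Longrightarrow> v \<noteq> [] \<Longrightarrow>
   dia (a # u) (b # v) = prepend (a * b) (dia u (1 # v) + dia (1 # u) v - Pr (dia u v))"
  by (cases u; cases v) auto

lemma dia_singleton_left: "dia [c] (b # v) = Poly_Mapping.single (c * b # v) 1"
  by (cases v) auto

lemma dia_singleton_right: "dia (b # v) [c] = Poly_Mapping.single (b * c # v) 1"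
  by (cases v) auto

lemma tens_single [simp]:
  "tens (Poly_Mapping.single x 1) (Poly_Mapping.single y 1) = Poly_Mapping.single (x, y) 1"
  by (simp add: tens_def)

lemma bullet_single [simp]:
  "bullet (Poly_Mapping.single (x, y) 1) (Poly_Mapping.single (x', y') 1) = tens (dia x x') (dia y y')"
  by (simp add: bullet_def)

lemma mult2_single [simp]:
  "mult2 (Poly_Mapping.single (x, y) 1) (Poly_Mapping.single (x', y') 1)
   = Poly_Mapping.single (x * x', y * y') 1"
  by (simp add: mult2_def)

lemma diamond_single [simp]:
  "diamond (Poly_Mapping.single x 1) (Poly_Mapping.single y 1) = dia x y"
  by (simp add: diamond_def)

lemma emb2_single [simp]: "emb2 (Poly_Mapping.single (a, b) 1) = Poly_Mapping.single ([a], [b]) 1"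
  by (simp add: emb2_def)

lemma id_Pr_single [simp]: "id_Pr (Poly_Mapping.single (x, y) 1) = Poly_Mapping.single (x, 1 # y) 1"
  by (simp add: id_Pr_def)

lemma prepend_single [simp]: "prepend c (Poly_Mapping.single x 1) = Poly_Mapping.single (c # x) 1"
  by (simp add: prepend_def)

lemma DeltaT_single [simp]: "DeltaT \<Delta> (Poly_Mapping.single x 1) = DeltaT_basis \<Delta> x"
  by (simp add: DeltaT_def)

lemma fm_bilinear_tens: "fm_bilinear tens"
  unfolding tens_def by (rule fm_bilinear_bilin_ext)

lemma fm_bilinear_bullet: "fm_bilinear bullet"
  unfolding bullet_def by (rule fm_bilinear_bilin_ext)

lemma fm_bilinear_mult2: "fm_bilinear mult2"
  unfolding mult2_def by (rule fm_bilinear_bilin_ext)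

lemma fm_bilinear_diamond: "fm_bilinear diamond"
  unfolding diamond_def by (rule fm_bilinear_bilin_ext)

lemma fm_linear_id_Pr: "fm_linear id_Pr"
  unfolding id_Pr_def by (rule fm_linear_lin_ext)

lemma fm_linear_emb2: "fm_linear emb2"
  unfolding emb2_def by (rule fm_linear_lin_ext)

lemma fm_linear_prepend: "fm_linear (prepend c)"
  unfolding prepend_def by (rule fm_linear_lin_ext)

lemma fm_linear_Pr: "fm_linear Pr"
  unfolding Pr_def by (rule fm_linear_prepend)

lemma fm_linear_DeltaT: "fm_linear (DeltaT \<Delta>)"
  unfolding DeltaT_def by (rule fm_linear_lin_ext)

lemmas fm_linear_maps =
  fm_bilinear_tens[THEN fm_bilinear_linear_left] fm_bilinear_tens[THEN fm_bilinear_linear_right]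
  fm_bilinear_bullet[THEN fm_bilinear_linear_left] fm_bilinear_bullet[THEN fm_bilinear_linear_right]
  fm_bilinear_mult2[THEN fm_bilinear_linear_left] fm_bilinear_mult2[THEN fm_bilinear_linear_right]
  fm_bilinear_diamond[THEN fm_bilinear_linear_left] fm_bilinear_diamond[THEN fm_bilinear_linear_right]
  fm_linear_id_Pr fm_linear_emb2 fm_linear_prepend fm_linear_Pr fm_linear_DeltaT

lemmas linear_simps =
  fm_linear_maps[THEN fm_linear_add] fm_linear_maps[THEN fm_linear_diff]
  fm_linear_maps[THEN fm_linear_smult_fm] fm_linear_maps[THEN fm_linear_zero]
  lin_ext_add lin_ext_diff lin_ext_smult_fm

lemma bullet_commute: "bullet u v = bullet v u"
  unfolding bullet_def by (rule bilin_ext_commute) (auto simp: dia_commute)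

definition sha2_elem :: "('a list \<times> 'a list \<Rightarrow>\<^sub>0 'k::zero) \<Rightarrow> bool" where
  "sha2_elem v \<longleftrightarrow> (\<forall>(xs, ys)\<in>Poly_Mapping.keys v. xs \<noteq> [] \<and> ys \<noteq> [])"

lemma sha2_elem_zero [simp]: "sha2_elem 0"
  by (simp add: sha2_elem_def)

lemma sha_elem_lin_ext:
  "(\<And>x. x \<in> Poly_Mapping.keys v \<Longrightarrow> sha_elem (f x)) \<Longrightarrow> sha_elem (lin_ext f v)"
  unfolding sha_elem_def using keys_lin_ext by fastforce

lemma sha2_elem_lin_ext:
  "(\<And>x. x \<in> Poly_Mapping.keys v \<Longrightarrow> sha2_elem (f x)) \<Longrightarrow> sha2_elem (lin_ext f v)"
  unfolding sha2_elem_def using keys_lin_ext by fastforce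

lemma sha_elem_add: "sha_elem u \<Longrightarrow> sha_elem v \<Longrightarrow> sha_elem (u + v)"
  unfolding sha_elem_def using keys_add by fastforce

lemma sha_elem_diff: "sha_elem u \<Longrightarrow> sha_elem v \<Longrightarrow> sha_elem (u - v)"
  unfolding sha_elem_def using keys_diff by fastforce

lemma sha_elem_prepend: "sha_elem (prepend c v)"
  unfolding prepend_def by (rule sha_elem_lin_ext) (simp add: sha_elem_def)

lemma sha_elem_Pr: "sha_elem (Pr v)"
  unfolding Pr_def by (rule sha_elem_prepend)

lemma sha_elem_dia: "sha_elem (dia xs ys)"
  by (induction xs ys rule: dia.induct) (simp_all add: sha_elem_prepend, simp_all add: sha_elem_def)

lemma sha2_elem_tens: "sha_elem u \<Longrightarrow> sha_elem v \<Longrightarrow> sha2_elem (tens u v)"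
  unfolding tens_def bilin_ext_eq_lin_ext
  by (intro sha2_elem_lin_ext) (auto simp: sha_elem_def sha2_elem_def)

lemma sha2_elem_bullet: "sha2_elem (bullet u v)"
  unfolding bullet_def bilin_ext_eq_lin_ext
  by (intro sha2_elem_lin_ext) (auto intro: sha2_elem_tens sha_elem_dia)

lemma sha2_elem_emb2: "sha2_elem (emb2 w)"
  unfolding emb2_def by (intro sha2_elem_lin_ext) (auto simp: sha2_elem_def)

lemma sha2_elem_id_Pr: "sha2_elem w \<Longrightarrow> sha2_elem (id_Pr w)"
  unfolding id_Pr_def by (intro sha2_elem_lin_ext) (auto simp: sha2_elem_def)

lemma sha2_elem_DeltaT_basis: "sha2_elem (DeltaT_basis \<Delta> xs)"
  by (induction \<Delta> xs rule: DeltaT_basis.induct)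
     (auto simp: sha2_elem_emb2 sha2_elem_id_Pr sha2_elem_bullet)

lemma sha2_elem_keys:
  "sha2_elem w \<Longrightarrow> p \<in> Poly_Mapping.keys w \<Longrightarrow> \<exists>a as b bs. p = (a # as, b # bs)"
  by (cases p) (auto simp: sha2_elem_def neq_Nil_conv)

section \<open>The operations respect the relations\<close>

lemma slots_sh_memI: "(\<lambda>a. xs @ a # ys) \<in> slots_sh"
  by (auto simp: slots_sh_def)

lemma slots_sh2_memI1: "(\<lambda>a. (xs @ a # ys, zs)) \<in> slots_sh2"
  by (auto simp: slots_sh2_def)

lemma slots_sh2_memI2: "(\<lambda>a. (zs, xs @ a # ys)) \<in> slots_sh2"
  unfolding slots_sh2_def by blast

lemma slots_sh_cases:
  assumes "F \<in> slots_sh"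
  obtains xs ys where "F = (\<lambda>a. xs @ a # ys)"
  using assms by (auto simp: slots_sh_def)

lemma slots_sh2_cases:
  assumes "F \<in> slots_sh2"
  obtains xs ys zs where "F = (\<lambda>a. (xs @ a # ys, zs))"
    | xs ys zs where "F = (\<lambda>a. (zs, xs @ a # ys))"
  using assms by (auto simp: slots_sh2_def)

lemma tensor_eq_prepend:
  fixes scale :: "'k::comm_ring_1 \<Rightarrow> 'a::ab_group_add \<Rightarrow> 'a"
  assumes "tensor_eq scale slots_sh u v"
  shows "tensor_eq scale slots_sh (prepend c u) (prepend c v)"
proof (rule tensor_eq_image[OF fm_linear_prepend _ assms])
  fix F :: "'a \<Rightarrow> 'a list" assume "F \<in> slots_sh"
  then obtain xs ys where "F = (\<lambda>a. xs @ a # ys)" by (rule slots_sh_cases)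
  then show "slot_linear scale slots_sh (\<lambda>a. prepend c (Poly_Mapping.single (F a) 1))"
    using slot_linear_single[OF slots_sh_memI[of "c # xs" ys]] by simp
qed

lemma tensor_eq_Pr: "tensor_eq scale slots_sh u v \<Longrightarrow> tensor_eq scale slots_sh (Pr u) (Pr v)"
  unfolding Pr_def by (rule tensor_eq_prepend)

lemma tensor_eq_id_Pr:
  fixes scale :: "'k::comm_ring_1 \<Rightarrow> 'a::comm_ring_1 \<Rightarrow> 'a"
  assumes "tensor_eq scale slots_sh2 u v"
  shows "tensor_eq scale slots_sh2 (id_Pr u) (id_Pr v)"
proof (rule tensor_eq_image[OF fm_linear_id_Pr _ assms])
  fix F :: "'a \<Rightarrow> 'a list \<times> 'a list" assume "F \<in> slots_sh2"
  then show "slot_linear scale slots_sh2 (\<lambda>a. id_Pr (Poly_Mapping.single (F a) 1))"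
  proof (cases rule: slots_sh2_cases)
    case (1 xs ys zs)
    then show ?thesis using slot_linear_single[OF slots_sh2_memI1[of xs ys "1 # zs"]] by simp
  next
    case (2 xs ys zs)
    then show ?thesis using slot_linear_single[OF slots_sh2_memI2[of zs "1 # xs" ys]] by simp
  qed
qed

lemma tensor_eq_emb2:
  fixes scale :: "'k::comm_ring_1 \<Rightarrow> 'a::comm_ring_1 \<Rightarrow> 'a"
  assumes "tensor_eq scale slots2 u v"
  shows "tensor_eq scale slots_sh2 (emb2 u) (emb2 v)"
proof (rule tensor_eq_image[OF fm_linear_emb2 _ assms])
  fix F :: "'a \<Rightarrow> 'a \<times> 'a" assume "F \<in> slots2"
  then consider b where "F = (\<lambda>a. (a, b))" | a where "F = (\<lambda>b. (a, b))"
    by (auto simp: slots2_def)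
  then show "slot_linear scale slots_sh2 (\<lambda>a. emb2 (Poly_Mapping.single (F a) 1))"
  proof cases
    case (1 b)
    then show ?thesis using slot_linear_single[OF slots_sh2_memI1[of "[]" "[]" "[b]"]] by simp
  next
    case (2 a)
    then show ?thesis using slot_linear_single[OF slots_sh2_memI2[of "[a]" "[]" "[]"]] by simp
  qed
qed

lemma tens_single_left: "tens (Poly_Mapping.single x 1) w = lin_ext (\<lambda>y. Poly_Mapping.single (x, y) 1) w"
  by (subst fm_linear_eq_lin_ext[OF fm_bilinear_tens[THEN fm_bilinear_linear_right]]) simp

lemma tens_single_right: "tens w (Poly_Mapping.single y 1) = lin_ext (\<lambda>x. Poly_Mapping.single (x, y) 1) w"
  by (subst fm_linear_eq_lin_ext[OF fm_bilinear_tens[THEN fm_bilinear_linear_left]]) simp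

lemma tensor_eq_tens_left:
  fixes scale :: "'k::comm_ring_1 \<Rightarrow> 'a::ab_group_add \<Rightarrow> 'a"
  assumes "tensor_eq scale slots_sh u v"
  shows "tensor_eq scale slots_sh2 (tens u w) (tens v w)"
proof (rule tensor_eq_image[OF fm_bilinear_tens[THEN fm_bilinear_linear_left] _ assms])
  fix F :: "'a \<Rightarrow> 'a list" assume "F \<in> slots_sh"
  then obtain xs ys where F: "F = (\<lambda>a. xs @ a # ys)" by (rule slots_sh_cases)
  show "slot_linear scale slots_sh2 (\<lambda>a. tens (Poly_Mapping.single (F a) 1) w)"
    unfolding F tens_single_left by (intro slot_linear_lin_ext slot_linear_single slots_sh2_memI1)
qed

lemma tensor_eq_tens_right:
  fixes scale :: "'k::comm_ring_1 \<Rightarrow> 'a::ab_group_add \<Rightarrow> 'a"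
  assumes "tensor_eq scale slots_sh u v"
  shows "tensor_eq scale slots_sh2 (tens w u) (tens w v)"
proof (rule tensor_eq_image[OF fm_bilinear_tens[THEN fm_bilinear_linear_right] _ assms])
  fix F :: "'a \<Rightarrow> 'a list" assume "F \<in> slots_sh"
  then obtain xs ys where F: "F = (\<lambda>a. xs @ a # ys)" by (rule slots_sh_cases)
  show "slot_linear scale slots_sh2 (\<lambda>a. tens w (Poly_Mapping.single (F a) 1))"
    unfolding F tens_single_right by (intro slot_linear_lin_ext slot_linear_single slots_sh2_memI2)
qed

lemma slot_linear_prepend:
  "slot_linear scale slots_sh f \<Longrightarrow> slot_linear scale slots_sh (\<lambda>a. prepend c (f a))"
  by (rule slot_linear_comp[OF fm_linear_prepend]) (auto intro: tensor_eq_prepend)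

lemma slot_linear_Pr: "slot_linear scale slots_sh f \<Longrightarrow> slot_linear scale slots_sh (\<lambda>a. Pr (f a))"
  by (rule slot_linear_comp[OF fm_linear_Pr]) (auto intro: tensor_eq_Pr)

lemma slot_linear_tens_left:
  "slot_linear scale slots_sh f \<Longrightarrow> slot_linear scale slots_sh2 (\<lambda>a. tens (f a) w)"
  by (rule slot_linear_comp[OF fm_bilinear_tens[THEN fm_bilinear_linear_left]])
     (auto intro: tensor_eq_tens_left)

lemma slot_linear_tens_right:
  "slot_linear scale slots_sh f \<Longrightarrow> slot_linear scale slots_sh2 (\<lambda>a. tens w (f a))"
  by (rule slot_linear_comp[OF fm_bilinear_tens[THEN fm_bilinear_linear_right]])
     (auto intro: tensor_eq_tens_right)

lemma slot_linear_prepend_head: "slot_linear scale slots_sh (\<lambda>a. prepend a w)"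
  unfolding prepend_def using slots_sh_memI[of "[]"]
  by (intro slot_linear_lin_ext slot_linear_single) simp

text \<open>This is where \<open>\<diamond>\<close> is shown to be well defined on the tensor powers: its recursion only
  multiplies entries by fixed elements of A, which is k-linear because A is a k-algebra.\<close>

lemma slot_linear_dia:
  fixes scale :: "'k::comm_ring_1 \<Rightarrow> 'a::comm_ring_1 \<Rightarrow> 'a"
  assumes alg: "comm_k_algebra scale"
  shows "slot_linear scale slots_sh (\<lambda>a. dia zs (xs @ a # ys) :: 'a list \<Rightarrow>\<^sub>0 'k)"
proof (induction "length zs + length xs" arbitrary: zs xs rule: less_induct)
  case less
  have single: "slot_linear scale slots_sh (\<lambda>a. Poly_Mapping.single (us @ a # vs) 1 :: 'a list \<Rightarrow>\<^sub>0 'k)"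
    for us vs
    by (rule slot_linear_single[OF slots_sh_memI])
  show ?case
  proof (cases zs)
    case Nil
    then show ?thesis by (simp add: slot_linear_zero)
  next
    case (Cons z u)
    consider "u = []" "xs = []" | x xs' where "u = []" "xs = x # xs'"
      | "u \<noteq> []" "xs = []" "ys = []" | y ys' where "u \<noteq> []" "xs = []" "ys = y # ys'"
      | x xs' where "u \<noteq> []" "xs = x # xs'"
      by (metis list.exhaust)
    then show ?thesis
    proof cases
      case 1
      then show ?thesis
        using slot_linear_mult[OF alg single[of "[]" ys], of z] by (simp add: Cons dia_singleton_left)
    next
      case (2 x xs')
      then show ?thesis
        using single[of "z * x # xs'" ys] by (simp add: Cons dia_singleton_left)
    next
      case 3
      then show ?thesis
        using slot_linear_mult[OF alg single[of "[]" u], of z] by (simp add: Cons dia_singleton_right)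
    next
      case (4 y ys')
      then show ?thesis
        using slot_linear_mult[OF alg slot_linear_prepend_head, of z]
        by (simp add: Cons dia_Cons_Cons)
    next
      case (5 x xs')
      have IH: "slot_linear scale slots_sh (\<lambda>a. dia u (1 # xs' @ a # ys) :: 'a list \<Rightarrow>\<^sub>0 'k)"
        "slot_linear scale slots_sh (\<lambda>a. dia (1 # u) (xs' @ a # ys) :: 'a list \<Rightarrow>\<^sub>0 'k)"
        "slot_linear scale slots_sh (\<lambda>a. dia u (xs' @ a # ys) :: 'a list \<Rightarrow>\<^sub>0 'k)"
        using less[of u "1 # xs'"] less[of "1 # u" xs'] less[of u xs'] by (simp_all add: Cons 5)
      have "slot_linear scale slots_sh (\<lambda>a. prepend (z * x)
              (dia u (1 # xs' @ a # ys) + dia (1 # u) (xs' @ a # ys) - Pr (dia u (xs' @ a # ys)))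
              :: 'a list \<Rightarrow>\<^sub>0 'k)"
        using IH by (intro slot_linear_prepend slot_linear_diff slot_linear_add slot_linear_Pr)
      with 5 show ?thesis by (simp add: Cons dia_Cons_Cons)
    qed
  qed
qed

lemma tensor_eq_bullet_right:
  fixes scale :: "'k::comm_ring_1 \<Rightarrow> 'a::comm_ring_1 \<Rightarrow> 'a"
  assumes alg: "comm_k_algebra scale" and "tensor_eq scale slots_sh2 v v'"
  shows "tensor_eq scale slots_sh2 (bullet u v) (bullet u v')"
proof (rule tensor_eq_image[OF fm_bilinear_bullet[THEN fm_bilinear_linear_right] _ assms(2)])
  fix F :: "'a \<Rightarrow> 'a list \<times> 'a list" assume F: "F \<in> slots_sh2"
  have "slot_linear scale slots_sh2
          (\<lambda>a. bullet (Poly_Mapping.single (x', y') 1) (Poly_Mapping.single (F a) 1))" for x' y'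
    using F
  proof (cases rule: slots_sh2_cases)
    case (1 xs ys zs)
    then show ?thesis
      using slot_linear_tens_left[OF slot_linear_dia[OF alg, of x' xs ys]] by simp
  next
    case (2 xs ys zs)
    then show ?thesis
      using slot_linear_tens_right[OF slot_linear_dia[OF alg, of y' xs ys]] by simp
  qed
  then show "slot_linear scale slots_sh2 (\<lambda>a. bullet u (Poly_Mapping.single (F a) 1))"
    by (subst fm_linear_eq_lin_ext[OF fm_bilinear_bullet[THEN fm_bilinear_linear_left]])
       (intro slot_linear_lin_ext, auto)
qed

lemma tensor_eq_bullet_left:
  fixes scale :: "'k::comm_ring_1 \<Rightarrow> 'a::comm_ring_1 \<Rightarrow> 'a"
  assumes "comm_k_algebra scale" and "tensor_eq scale slots_sh2 u u'"
  shows "tensor_eq scale slots_sh2 (bullet u v) (bullet u' v)"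
  unfolding bullet_commute[of _ v] by (rule tensor_eq_bullet_right[OF assms])

lemma bullet_unit: "sha2_elem w \<Longrightarrow> bullet (Poly_Mapping.single ([1], [1]) 1) w = w"
  by (rule fm_linear_eqI[OF fm_bilinear_bullet[THEN fm_bilinear_linear_right] fm_linear_ident],
      drule (1) sha2_elem_keys) (auto simp: dia_singleton_left)

lemma DeltaT_Pr: "sha_elem w \<Longrightarrow> DeltaT \<Delta> (Pr w) = id_Pr (DeltaT \<Delta> w)"
  by (rule fm_linear_eqI[OF fm_linear_comp[OF fm_linear_DeltaT fm_linear_Pr]
        fm_linear_comp[OF fm_linear_id_Pr fm_linear_DeltaT]])
     (auto simp: Pr_def sha_elem_def neq_Nil_conv)

lemma id_Pr_tens: "id_Pr (tens u v) = tens u (Pr v)"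
  by (rule fm_bilinear_eqI[of "\<lambda>u v. id_Pr (tens u v)" "\<lambda>u v. tens u (Pr v)"])
     (simp_all add: fm_bilinear_def fm_linear_def linear_simps, simp add: Pr_def)

lemma id_Pr_Nijenhuis:
  assumes "sha2_elem u" "sha2_elem v"
  shows "bullet (id_Pr u) (id_Pr v)
       = id_Pr (bullet u (id_Pr v) + bullet (id_Pr u) v - id_Pr (bullet u v))"
proof (rule fm_bilinear_eqI[of "\<lambda>u v. bullet (id_Pr u) (id_Pr v)"
      "\<lambda>u v. id_Pr (bullet u (id_Pr v) + bullet (id_Pr u) v - id_Pr (bullet u v))"])
  fix x y assume x: "x \<in> Poly_Mapping.keys u" and y: "y \<in> Poly_Mapping.keys v"
  obtain x1 y1 where xx: "x = (x1, y1)" and y1: "y1 \<noteq> []" using sha2_elem_keys[OF assms(1) x] by auto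
  obtain x2 y2 where yy: "y = (x2, y2)" and y2: "y2 \<noteq> []" using sha2_elem_keys[OF assms(2) y] by auto
  have d: "dia (1 # y1) (1 # y2) = Pr (dia y1 (1 # y2) + dia (1 # y1) y2 - Pr (dia y1 y2))"
    using dia_Cons_Cons[OF y1 y2, of 1 1] by (simp add: Pr_def)
  show "bullet (id_Pr (Poly_Mapping.single x 1)) (id_Pr (Poly_Mapping.single y 1))
    = id_Pr (bullet (Poly_Mapping.single x 1) (id_Pr (Poly_Mapping.single y 1))
        + bullet (id_Pr (Poly_Mapping.single x 1)) (Poly_Mapping.single y 1)
        - id_Pr (bullet (Poly_Mapping.single x 1) (Poly_Mapping.single y 1)))"
    by (simp only: xx yy d bullet_single id_Pr_single id_Pr_tens linear_simps)
qed (simp_all add: fm_bilinear_def fm_linear_def linear_simps smult_fm_add_right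
       smult_fm_diff_right algebra_simps)

lemma bullet_emb2: "bullet (emb2 u) (emb2 v) = emb2 (mult2 u v)"
proof (rule fm_bilinear_eqI[of "\<lambda>u v. bullet (emb2 u) (emb2 v)" "\<lambda>u v. emb2 (mult2 u v)"])
  fix x y :: "'a \<times> 'a"
  show "bullet (emb2 (Poly_Mapping.single x 1)) (emb2 (Poly_Mapping.single y 1))
      = emb2 (mult2 (Poly_Mapping.single x 1) (Poly_Mapping.single y 1))"
    by (cases x; cases y) simp
qed (simp_all add: fm_bilinear_def fm_linear_def linear_simps)

lemma lin_ext_dia_singleton_prepend:
  "sha_elem w \<Longrightarrow> lin_ext (dia [e]) (prepend a w) = prepend (e * a) w"
  by (rule fm_linear_eqI[OF fm_linear_comp[OF fm_linear_lin_ext fm_linear_prepend] fm_linear_prepend])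
     (auto simp: sha_elem_def neq_Nil_conv dia_singleton_left)

lemma dia_mult_heads:
  "(dia (c * a # as) (d * b # bs) :: 'a::comm_ring_1 list \<Rightarrow>\<^sub>0 'k::comm_ring_1)
   = lin_ext (dia [c * d]) (dia (a # as) (b # bs))"
proof (cases "as = [] \<or> bs = []")
  case True
  then show ?thesis
    by (auto simp: dia_singleton_left dia_singleton_right lin_ext_single mult_ac neq_Nil_conv)
next
  case False
  have W: "sha_elem (dia as (1 # bs) + dia (1 # as) bs - Pr (dia as bs) :: 'a list \<Rightarrow>\<^sub>0 'k)"
    by (intro sha_elem_diff sha_elem_add sha_elem_dia sha_elem_Pr)
  from False show ?thesis
    using lin_ext_dia_singleton_prepend[OF W, of "c * d" "a * b"]
    by (simp add: dia_Cons_Cons mult_ac)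
qed

lemma bullet_single_tens:
  "bullet (Poly_Mapping.single (xs, ys) 1) (tens u v) = tens (lin_ext (dia xs) u) (lin_ext (dia ys) v)"
  by (rule fm_bilinear_eqI[of "\<lambda>u v. bullet (Poly_Mapping.single (xs, ys) 1) (tens u v)"
        "\<lambda>u v. tens (lin_ext (dia xs) u) (lin_ext (dia ys) v)"])
     (simp_all add: fm_bilinear_def fm_linear_def linear_simps)

lemma bullet_emb2_interchange:
  assumes p: "sha2_elem p" and q: "sha2_elem q"
  shows "bullet (bullet (emb2 u) p) (bullet (emb2 v) q) = bullet (emb2 (mult2 u v)) (bullet p q)"
proof (rule fm_bilinear_eqI[of "\<lambda>p q. bullet (bullet (emb2 u) p) (bullet (emb2 v) q)"
      "\<lambda>p q. bullet (emb2 (mult2 u v)) (bullet p q)"])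
  fix z w assume "z \<in> Poly_Mapping.keys p" "w \<in> Poly_Mapping.keys q"
  then obtain r rs s ss r' rs' s' ss' where z: "z = (r # rs, s # ss)" and w: "w = (r' # rs', s' # ss')"
    using sha2_elem_keys[OF p] sha2_elem_keys[OF q] by metis
  show "bullet (bullet (emb2 u) (Poly_Mapping.single z 1)) (bullet (emb2 v) (Poly_Mapping.single w 1))
      = bullet (emb2 (mult2 u v)) (bullet (Poly_Mapping.single z 1) (Poly_Mapping.single w 1))"
  proof (rule fm_bilinear_eqI[of
        "\<lambda>u v. bullet (bullet (emb2 u) (Poly_Mapping.single z 1)) (bullet (emb2 v) (Poly_Mapping.single w 1))"
        "\<lambda>u v. bullet (emb2 (mult2 u v)) (bullet (Poly_Mapping.single z 1) (Poly_Mapping.single w 1))"])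
    fix x y :: "'a \<times> 'a"
    show "bullet (bullet (emb2 (Poly_Mapping.single x 1)) (Poly_Mapping.single z 1))
            (bullet (emb2 (Poly_Mapping.single y 1)) (Poly_Mapping.single w 1))
        = bullet (emb2 (mult2 (Poly_Mapping.single x 1) (Poly_Mapping.single y 1)))
            (bullet (Poly_Mapping.single z 1) (Poly_Mapping.single w 1))"
      by (cases x; cases y) (simp add: z w dia_singleton_left bullet_single_tens dia_mult_heads)
  qed (simp_all add: fm_bilinear_def fm_linear_def linear_simps)
qed (simp_all add: fm_bilinear_def fm_linear_def linear_simps)

lemma bullet_emb2_assoc:
  assumes "sha2_elem w"
  shows "bullet (emb2 u) (bullet (emb2 v) w) = bullet (emb2 (mult2 u v)) w"
proof -
  let ?one = "Poly_Mapping.single ([1], [1]) 1"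
  have "bullet (emb2 u) (bullet (emb2 v) w) = bullet (bullet (emb2 u) ?one) (bullet (emb2 v) w)"
    by (simp add: bullet_commute[of _ ?one] bullet_unit sha2_elem_emb2)
  also have "\<dots> = bullet (emb2 (mult2 u v)) (bullet ?one w)"
    by (rule bullet_emb2_interchange[OF _ assms]) (simp add: sha2_elem_def)
  finally show ?thesis
    by (simp add: bullet_unit assms)
qed

locale multiplicative_coproduct =
  fixes scale :: "'k::comm_ring_1 \<Rightarrow> 'a::comm_ring_1 \<Rightarrow> 'a"
    and \<Delta> :: "'a \<Rightarrow> ('a \<times> 'a \<Rightarrow>\<^sub>0 'k)"
  assumes algebra: "comm_k_algebra scale"
    and \<Delta>_mult: "tensor_eq scale slots2 (\<Delta> (a * b)) (mult2 (\<Delta> a) (\<Delta> b))"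
    and \<Delta>_one: "tensor_eq scale slots2 (\<Delta> 1) (Poly_Mapping.single (1, 1) 1)"
begin

text \<open>\<open>DeltaT_basis\<close> treats a leading \<open>1\<close> separately; both branches agree modulo the
  relations because \<open>\<Delta> 1 \<equiv> 1 \<otimes> 1\<close>.\<close>

lemma DeltaT_basis_Cons:
  assumes "w \<noteq> []"
  shows "tensor_eq scale slots_sh2 (DeltaT_basis \<Delta> (c # w)) (bullet (emb2 (\<Delta> c)) (id_Pr (DeltaT_basis \<Delta> w)))"
proof -
  obtain w1 ws where w: "w = w1 # ws" using assms by (cases w) auto
  define z where "z = id_Pr (DeltaT_basis \<Delta> w)"
  have z: "sha2_elem z" unfolding z_def by (intro sha2_elem_id_Pr sha2_elem_DeltaT_basis)
  show ?thesis
  proof (cases "c = 1")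
    case True
    have "DeltaT_basis \<Delta> (c # w) = bullet (emb2 (Poly_Mapping.single (1, 1) 1)) z"
      using bullet_unit[OF z] by (simp add: True w z_def)
    also have "tensor_eq scale slots_sh2 \<dots> (bullet (emb2 (\<Delta> c)) z)"
      using \<Delta>_one by (intro tensor_eq_bullet_left[OF algebra] tensor_eq_emb2) (simp add: True tensor_eq_sym)
    finally show ?thesis by (simp add: z_def)
  next
    case False
    then show ?thesis by (simp add: w)
  qed
qed

lemma DeltaT_prepend:
  assumes "sha_elem w"
  shows "tensor_eq scale slots_sh2 (DeltaT \<Delta> (prepend c w)) (bullet (emb2 (\<Delta> c)) (id_Pr (DeltaT \<Delta> w)))"
proof (rule tensor_eq_linearI[of "\<lambda>w. DeltaT \<Delta> (prepend c w)" "\<lambda>w. bullet (emb2 (\<Delta> c)) (id_Pr (DeltaT \<Delta> w))"])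
  show "fm_linear (\<lambda>w. DeltaT \<Delta> (prepend c w))" "fm_linear (\<lambda>w. bullet (emb2 (\<Delta> c)) (id_Pr (DeltaT \<Delta> w)))"
    by (rule fm_linear_comp[OF fm_linear_DeltaT fm_linear_prepend],
        rule fm_linear_comp[OF fm_bilinear_bullet[THEN fm_bilinear_linear_right]
          fm_linear_comp[OF fm_linear_id_Pr fm_linear_DeltaT]])
  fix xs assume "xs \<in> Poly_Mapping.keys w"
  with assms have "xs \<noteq> []" by (simp add: sha_elem_def)
  then show "tensor_eq scale slots_sh2 (DeltaT \<Delta> (prepend c (Poly_Mapping.single xs 1)))
      (bullet (emb2 (\<Delta> c)) (id_Pr (DeltaT \<Delta> (Poly_Mapping.single xs 1))))"
    unfolding prepend_single DeltaT_single by (rule DeltaT_basis_Cons)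
qed

lemma DeltaT_dia_singleton:
  assumes "v \<noteq> []"
  shows "tensor_eq scale slots_sh2 (DeltaT \<Delta> (dia [a] (b # v)))
           (bullet (DeltaT_basis \<Delta> [a]) (DeltaT_basis \<Delta> (b # v)))"
proof -
  define z where "z = id_Pr (DeltaT_basis \<Delta> v)"
  have z: "sha2_elem z" unfolding z_def by (intro sha2_elem_id_Pr sha2_elem_DeltaT_basis)
  have "DeltaT \<Delta> (dia [a] (b # v)) = DeltaT_basis \<Delta> (a * b # v)"
    by (simp add: dia_singleton_left)
  also have "tensor_eq scale slots_sh2 \<dots> (bullet (emb2 (\<Delta> (a * b))) z)"
    unfolding z_def by (rule DeltaT_basis_Cons[OF assms])
  also have "tensor_eq scale slots_sh2 \<dots> (bullet (emb2 (mult2 (\<Delta> a) (\<Delta> b))) z)"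
    by (intro tensor_eq_bullet_left[OF algebra] tensor_eq_emb2 \<Delta>_mult)
  also have "\<dots> = bullet (emb2 (\<Delta> a)) (bullet (emb2 (\<Delta> b)) z)"
    by (rule bullet_emb2_assoc[OF z, symmetric])
  also have "tensor_eq scale slots_sh2 \<dots> (bullet (emb2 (\<Delta> a)) (DeltaT_basis \<Delta> (b # v)))"
    unfolding z_def by (rule tensor_eq_bullet_right[OF algebra tensor_eq_sym[OF DeltaT_basis_Cons[OF assms]]])
  finally show ?thesis by simp
qed

lemma DeltaT_dia:
  "xs \<noteq> [] \<Longrightarrow> ys \<noteq> [] \<Longrightarrow>
   tensor_eq scale slots_sh2 (DeltaT \<Delta> (dia xs ys)) (bullet (DeltaT_basis \<Delta> xs) (DeltaT_basis \<Delta> ys))"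
proof (induction xs ys rule: dia.induct)
  case (1 a b)
  have "DeltaT \<Delta> (dia [a] [b]) = emb2 (\<Delta> (a * b))" by simp
  also have "tensor_eq scale slots_sh2 \<dots> (emb2 (mult2 (\<Delta> a) (\<Delta> b)))"
    by (intro tensor_eq_emb2 \<Delta>_mult)
  also have "\<dots> = bullet (DeltaT_basis \<Delta> [a]) (DeltaT_basis \<Delta> [b])"
    by (simp add: bullet_emb2)
  finally show ?case .
next
  case (2 a b b' bs)
  then show ?case using DeltaT_dia_singleton[of "b' # bs" a b] by simp
next
  case (3 a a' as b)
  show ?case by (subst dia_commute, subst bullet_commute, rule DeltaT_dia_singleton) simp
next
  case (4 a a' as b b' bs)
  define u where "u = a' # as"
  define v where "v = b' # bs"
  define U where "U = DeltaT_basis \<Delta> u"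
  define V where "V = DeltaT_basis \<Delta> v"
  have u: "u \<noteq> []" and v: "v \<noteq> []" by (simp_all add: u_def v_def)
  have U: "sha2_elem U" and V: "sha2_elem V" by (simp_all add: U_def V_def sha2_elem_DeltaT_basis)
  define W :: "'a list \<Rightarrow>\<^sub>0 'k" where "W = dia u (1 # v) + dia (1 # u) v - Pr (dia u v)"
  have W: "sha_elem W" unfolding W_def by (intro sha_elem_diff sha_elem_add sha_elem_dia sha_elem_Pr)
  have IH: "tensor_eq scale slots_sh2 (DeltaT \<Delta> (dia u (1 # v))) (bullet U (id_Pr V))"
    "tensor_eq scale slots_sh2 (DeltaT \<Delta> (dia (1 # u) v)) (bullet (id_Pr U) V)"
    "tensor_eq scale slots_sh2 (DeltaT \<Delta> (dia u v)) (bullet U V)"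
    using "4.IH" by (simp_all add: u_def v_def U_def V_def)
  have "DeltaT \<Delta> (dia (a # a' # as) (b # b' # bs)) = DeltaT \<Delta> (prepend (a * b) W)"
    by (simp add: W_def u_def v_def)
  also have "tensor_eq scale slots_sh2 \<dots> (bullet (emb2 (\<Delta> (a * b))) (id_Pr (DeltaT \<Delta> W)))"
    by (rule DeltaT_prepend[OF W])
  also have "DeltaT \<Delta> W = DeltaT \<Delta> (dia u (1 # v)) + DeltaT \<Delta> (dia (1 # u) v) - id_Pr (DeltaT \<Delta> (dia u v))"
    by (simp add: W_def linear_simps DeltaT_Pr[OF sha_elem_dia])
  also have "tensor_eq scale slots_sh2 (bullet (emb2 (\<Delta> (a * b))) (id_Pr \<dots>))
     (bullet (emb2 (\<Delta> (a * b))) (id_Pr (bullet U (id_Pr V) + bullet (id_Pr U) V - id_Pr (bullet U V))))"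
    by (intro tensor_eq_bullet_right[OF algebra] tensor_eq_id_Pr tensor_eq_add tensor_eq_diff IH)
  also have "id_Pr (bullet U (id_Pr V) + bullet (id_Pr U) V - id_Pr (bullet U V)) = bullet (id_Pr U) (id_Pr V)"
    by (rule id_Pr_Nijenhuis[OF U V, symmetric])
  also have "tensor_eq scale slots_sh2 (bullet (emb2 (\<Delta> (a * b))) (bullet (id_Pr U) (id_Pr V)))
      (bullet (emb2 (mult2 (\<Delta> a) (\<Delta> b))) (bullet (id_Pr U) (id_Pr V)))"
    by (intro tensor_eq_bullet_left[OF algebra] tensor_eq_emb2 \<Delta>_mult)
  also have "\<dots> = bullet (bullet (emb2 (\<Delta> a)) (id_Pr U)) (bullet (emb2 (\<Delta> b)) (id_Pr V))"
    by (rule bullet_emb2_interchange[symmetric]) (intro sha2_elem_id_Pr U V)+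
  also have "tensor_eq scale slots_sh2 \<dots> (bullet (DeltaT_basis \<Delta> (a # u)) (bullet (emb2 (\<Delta> b)) (id_Pr V)))"
    unfolding U_def by (rule tensor_eq_bullet_left[OF algebra tensor_eq_sym[OF DeltaT_basis_Cons[OF u]]])
  also have "tensor_eq scale slots_sh2 \<dots> (bullet (DeltaT_basis \<Delta> (a # u)) (DeltaT_basis \<Delta> (b # v)))"
    unfolding V_def by (rule tensor_eq_bullet_right[OF algebra tensor_eq_sym[OF DeltaT_basis_Cons[OF v]]])
  finally show ?case by (simp add: u_def v_def)
qed auto

end

theorem proposition3p4:
  fixes scale :: "'k::comm_ring_1 \<Rightarrow> 'a::comm_ring_1 \<Rightarrow> 'a"
    and \<Delta> :: "'a \<Rightarrow> ('a \<times> 'a \<Rightarrow>\<^sub>0 'k)"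
    and \<epsilon> :: "'a \<Rightarrow> 'k"
    and x y :: "'a list \<Rightarrow>\<^sub>0 'k"
  assumes "left_counital_bialgebra scale \<Delta> \<epsilon>"
    and "sha_elem x" and "sha_elem y"
  shows "tensor_eq scale slots_sh2 (DeltaT \<Delta> (diamond x y)) (bullet (DeltaT \<Delta> x) (DeltaT \<Delta> y))"
proof -
  interpret multiplicative_coproduct scale \<Delta>
    using assms(1) by unfold_locales (simp_all add: left_counital_bialgebra_def)
  show ?thesis
  proof (rule tensor_eq_bilinearI[of "\<lambda>x y. DeltaT \<Delta> (diamond x y)"
        "\<lambda>x y. bullet (DeltaT \<Delta> x) (DeltaT \<Delta> y)"])
    show "fm_bilinear (\<lambda>x y. DeltaT \<Delta> (diamond x y))"
      unfolding fm_bilinear_def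
      using fm_linear_comp[OF fm_linear_DeltaT fm_bilinear_diamond[THEN fm_bilinear_linear_left]]
        fm_linear_comp[OF fm_linear_DeltaT fm_bilinear_diamond[THEN fm_bilinear_linear_right]]
      by blast
    show "fm_bilinear (\<lambda>x y. bullet (DeltaT \<Delta> x) (DeltaT \<Delta> y))"
      unfolding fm_bilinear_def
      using fm_linear_comp[OF fm_bilinear_bullet[THEN fm_bilinear_linear_left] fm_linear_DeltaT]
        fm_linear_comp[OF fm_bilinear_bullet[THEN fm_bilinear_linear_right] fm_linear_DeltaT]
      by blast
    fix xs ys assume "xs \<in> Poly_Mapping.keys x" "ys \<in> Poly_Mapping.keys y"
    with assms(2,3) show "tensor_eq scale slots_sh2 (DeltaT \<Delta> (diamond (Poly_Mapping.single xs 1) (Poly_Mapping.single ys 1)))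
        (bullet (DeltaT \<Delta> (Poly_Mapping.single xs 1)) (DeltaT \<Delta> (Poly_Mapping.single ys 1)))"
      by (simp add: sha_elem_def DeltaT_dia)
  qed
qed

end
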